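(* Let $n,k$ be integers with $1\le k\le n-2$ and let $c_0,\dots,c_{n-1}$ be real constants. For an ordered bid vector $b_1\ge\dots\ge b_n\ge 0$ define $r_i=c_0+c_1b_1+\dots+c_{i-1}b_{i-1}+c_ib_{i+1}+\dots+c_{n-1}b_n$ for $i=1,\dots,n$. Suppose that for every ordered bid vector $b_1\ge\dots\ge b_n\ge 0$ we have both $r_n\ge 0$ (IR$_u$) and $\sum_{i=1}^n r_i\le k\,b_k$ (Approx-IR$_M$). Then $c_i=0$ for $i=0,1,\dots,k-1$.
   Context: Here $r_i$ is the rebate given to the $i$-th highest included bidder in a block of $n$ included transactions of which the top $k$ are confirmed; $r_i$ depends only on the other bids, listed in decreasing order. *)

theory Defs
  imports Main "HOL.Real"
begin

text \<open>Bid vectors are functions b :: nat => real, with b 1, ..., b n meaningful.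
  Coefficients c 0, ..., c (n-1).\<close>

definition ordered_bids :: "nat \<Rightarrow> (nat \<Rightarrow> real) \<Rightarrow> bool" where
  "ordered_bids n b \<longleftrightarrow> (\<forall>i. 1 \<le> i \<and> i < n \<longrightarrow> b i \<ge> b (i+1)) \<and> b n \<ge> 0"

definition rebate :: "nat \<Rightarrow> (nat \<Rightarrow> real) \<Rightarrow> (nat \<Rightarrow> real) \<Rightarrow> nat \<Rightarrow> real" where
  "rebate n c b i = c 0 + (\<Sum>j=1..<i. c j * b j) + (\<Sum>j=i..<n. c j * b (j+1))"

end

theory Submission
  imports Defs
begin

text \<open>Strong induction on \<open>m < k\<close>. Once \<open>c 0 = \<dots> = c (m-1) = 0\<close>, let the top \<open>m\<close> bidders bid 1 and the
  others 0. Then \<open>r\<^sub>i = 0\<close> for \<open>i \<le> m\<close> and \<open>r\<^sub>i = c\<^sub>m\<close> for \<open>i > m\<close>, while \<open>b\<^sub>k = 0\<close>. So IR\<open>\<^sub>u\<close> gives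
  \<open>c\<^sub>m \<ge> 0\<close> and Approx-IR\<open>\<^sub>M\<close> gives \<open>(n - m) c\<^sub>m \<le> 0\<close>, whence \<open>c\<^sub>m = 0\<close>.\<close>

definition top_unit_bids :: "nat \<Rightarrow> nat \<Rightarrow> real" where
  "top_unit_bids m j = (if 1 \<le> j \<and> j \<le> m then 1 else 0)"

lemma ordered_bids_top_unit_bids: "ordered_bids n (top_unit_bids m)"
  by (simp add: ordered_bids_def top_unit_bids_def)

lemma rebate_top_unit_bids:
  fixes c :: "nat \<Rightarrow> real"
  assumes lower: "\<forall>l<m. c l = 0" and "1 \<le> i"
  shows "rebate n c (top_unit_bids m) i = (if m < i then c m else 0)"
proof -
  have first: "(\<Sum>j=1..<i. c j * top_unit_bids m j) = (if 1 \<le> m \<and> m < i then c m else 0)"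
  proof -
    have "(\<Sum>j=1..<i. c j * top_unit_bids m j) = (\<Sum>j=1..<i. if j = m then c m else 0)"
      using lower by (intro sum.cong) (auto simp: top_unit_bids_def)
    then show ?thesis by (simp add: sum.delta)
  qed
  have second: "(\<Sum>j=i..<n. c j * top_unit_bids m (j+1)) = 0"
    using lower by (intro sum.neutral) (auto simp: top_unit_bids_def)
  have "c 0 = (if m = 0 then c m else 0)"
    using lower by simp
  then show ?thesis
    using \<open>1 \<le> i\<close> unfolding rebate_def first second by auto
qed

lemma sum_rebate_top_unit_bids:
  fixes c :: "nat \<Rightarrow> real"
  assumes "\<forall>l<m. c l = 0"
  shows "(\<Sum>i=1..n. rebate n c (top_unit_bids m) i) = real (n - m) * c m"
proof -
  have "(\<Sum>i=1..n. rebate n c (top_unit_bids m) i) = (\<Sum>i=1..n. if m < i then c m else 0)"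
    using assms by (intro sum.cong) (simp_all add: rebate_top_unit_bids)
  also have "\<dots> = (\<Sum>i\<in>{Suc m..n}. c m)"
    by (rule sum.mono_neutral_cong_right) auto
  finally show ?thesis by simp
qed

lemma coeff_eq_0_if_lower_coeffs_eq_0:
  fixes c :: "nat \<Rightarrow> real"
  assumes "m < k" and "k \<le> n" and lower: "\<forall>l<m. c l = 0"
    and IR_u: "\<And>b. ordered_bids n b \<Longrightarrow> rebate n c b n \<ge> 0"
    and Approx_IR_M: "\<And>b. ordered_bids n b \<Longrightarrow> (\<Sum>i=1..n. rebate n c b i) \<le> real k * b k"
  shows "c m = 0"
proof -
  have "c m \<ge> 0"
    using IR_u[OF ordered_bids_top_unit_bids, of m] rebate_top_unit_bids[OF lower, of n n] assms(1,2)
    by simp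
  moreover have "real (n - m) * c m \<le> 0"
    using Approx_IR_M[OF ordered_bids_top_unit_bids, of m] sum_rebate_top_unit_bids[OF lower, of n] \<open>m < k\<close>
    by (simp add: top_unit_bids_def)
  moreover have "real (n - m) > 0"
    using assms(1,2) by simp
  ultimately show ?thesis
    by (simp add: mult_le_0_iff)
qed

theorem claim2:
  fixes n k :: nat and c :: "nat \<Rightarrow> real"
  assumes "1 \<le> k" and "k + 2 \<le> n"
    and IR_u: "\<And>b. ordered_bids n b \<Longrightarrow> rebate n c b n \<ge> 0"
    and Approx_IR_M: "\<And>b. ordered_bids n b \<Longrightarrow> (\<Sum>i=1..n. rebate n c b i) \<le> real k * b k"
  shows "\<forall>i<k. c i = 0"
proof (intro allI impI)
  fix i
  show "i < k \<Longrightarrow> c i = 0"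
  proof (induction i rule: less_induct)
    case (less m)
    then have lower: "\<forall>l<m. c l = 0" by simp
    show ?case
      by (rule coeff_eq_0_if_lower_coeffs_eq_0[OF less.prems _ lower IR_u Approx_IR_M])
        (use \<open>k + 2 \<le> n\<close> in simp)
  qed
qed

end
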